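(* Let $\mathcal{T}_1,\mathcal{T}_2,\mathcal{T}_3$ be channelled transition systems and let $\|$ be the parallel composition defined below. Then (i) $\mathcal{T}_1\|\mathcal{T}_2=\mathcal{T}_2\|\mathcal{T}_1$, and (ii) $(\mathcal{T}_1\|\mathcal{T}_2)\|\mathcal{T}_3=\mathcal{T}_1\|(\mathcal{T}_2\|\mathcal{T}_3)$, where these equalities are understood up to the canonical identification of composite states (and state labels) $(s_1,s_2)$ with $(s_2,s_1)$, respectively $((s_1,s_2),s_3)$ with $(s_1,(s_2,s_3))$.
   Context: A channelled transition system (CTS) is a tuple $\mathcal{T}=\langle C,\Sigma,\Upsilon,S,S_0,R,L,\mathsf{ls}\rangle$ where $C$ is a set of channels containing a distinguished broadcast channel $\star$, $\Sigma$ is a state alphabet, $\Upsilon=\Upsilon^+\times\{!,?\}\times C$ for some set $\Upsilon^+$ (a label $(\upsilon,!,c)$ is a send and $(\upsilon,?,c)$ a receive of $\upsilon$ on channel $c$), $S$ is a set of states, $S_0\subseteq S$ the initial states, $R\subseteq S\times\Upsilon\times S$ the transition relation, $L:S\to\Sigma$ a labelling, and $\mathsf{ls}:S\to 2^C$ a listening function with $\star\in\mathsf{ls}(s)$ for all $s$. The composition of $\mathcal{T}_i=\langle C_i,\Sigma_i,\Upsilon_i,S_i,S_0^i,R_i,L_i,\mathsf{ls}^i\rangle$ ($i=1,2$) is $\mathcal{T}_1\|\mathcal{T}_2=\langle C_1\cup C_2,\Sigma_1\times\Sigma_2,\Upsilon_1\cup\Upsilon_2,S_1\times S_2,S_0^1\times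 S_0^2,R,L,\mathsf{ls}\rangle$ with $L(s_1,s_2)=(L_1(s_1),L_2(s_2))$, $\mathsf{ls}(s_1,s_2)=\mathsf{ls}^1(s_1)\cup\mathsf{ls}^2(s_2)$, and $R$ the union of the following three sets: (1) triples $((s_1,s_2),(\upsilon,!,c),(s_1',s_2'))$ such that one of: $(s_1,(\upsilon,!,c),s_1')\in R_1$ and $(s_2,(\upsilon,?,c),s_2')\in R_2$; or $(s_1,(\upsilon,?,c),s_1')\in R_1$ and $(s_2,(\upsilon,!,c),s_2')\in R_2$; or $(s_1,(\upsilon,!,c),s_1')\in R_1$, $c\notin\mathsf{ls}^2(s_2)$ and $s_2=s_2'$; or $c\notin\mathsf{ls}^1(s_1)$, $s_1=s_1'$ and $(s_2,(\upsilon,!,c),s_2')\in R_2$; (2) triples $((s_1,s_2),(\upsilon,?,c),(s_1',s_2'))$ such that one of: $(s_1,(\upsilon,?,c),s_1')\in R_1$ and $(s_2,(\upsilon,?,c),s_2')\in R_2$; or $(s_1,(\upsilon,?,c),s_1')\in R_1$, $c\notin\mathsf{ls}^2(s_2)$ and $s_2=s_2'$; or $c\notin\mathsf{ls}^1(s_1)$, $s_1=s_1'$ and $(s_2,(\upsilon,?,c),s_2')\in R_2$; (3) triples $((s_1,s_2),(\upsilon,\gamma,\star),(s_1',s_2'))$ with $\gamma\in\{!,?\}$ such that either $(s_1,(\upsilon,\gamma,\star),s_1')\in R_1$, $s_2=s_2'$ and there is no $s_2''$ with $(s_2,(\upsilon,?,\star),s_2'')\in R_2$; or $s_1=s_1'$,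 there is no $s_1''$ with $(s_1,(\upsilon,?,\star),s_1'')\in R_1$, and $(s_2,(\upsilon,\gamma,\star),s_2')\in R_2$. *)

theory Defs
  imports Main
begin

datatype dir = Snd | Rcv

(* A channelled transition system.  'c channels, 'a state alphabet,
   'u message set Upsilon^+, 's states.  The broadcast channel star :: 'c is a
   global parameter shared by all systems. *)
record ('c, 'a, 'u, 's) cts =
  chans :: "'c set"
  alph  :: "'a set"
  labs  :: "('u \<times> dir \<times> 'c) set"
  states :: "'s set"
  inits :: "'s set"
  trans :: "('s \<times> ('u \<times> dir \<times> 'c) \<times> 's) set"
  lab :: "'s \<Rightarrow> 'a"
  ls :: "'s \<Rightarrow> 'c set"

definition is_cts :: "'c \<Rightarrow> ('c, 'a, 'u, 's) cts \<Rightarrow> bool" where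
  "is_cts star T \<longleftrightarrow>
     star \<in> chans T \<and>
     (\<exists>U. labs T = U \<times> UNIV \<times> chans T) \<and>
     inits T \<subseteq> states T \<and>
     trans T \<subseteq> states T \<times> labs T \<times> states T \<and>
     (\<forall>s\<in>states T. lab T s \<in> alph T) \<and>
     (\<forall>s\<in>states T. ls T s \<subseteq> chans T \<and> star \<in> ls T s)"

definition compose_trans ::
  "'c \<Rightarrow> ('c, 'a1, 'u, 's1) cts \<Rightarrow> ('c, 'a2, 'u, 's2) cts
     \<Rightarrow> (('s1 \<times> 's2) \<times> ('u \<times> dir \<times> 'c) \<times> ('s1 \<times> 's2)) set" where
  "compose_trans star T1 T2 =
    {((s1, s2), (u, Snd, c), (s1', s2')) | s1 s2 u c s1' s2'.
        ((s1, (u, Snd, c), s1') \<in> trans T1 \<and> (s2, (u, Rcv, c), s2') \<in> trans T2)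
      \<or> ((s1, (u, Rcv, c), s1') \<in> trans T1 \<and> (s2, (u, Snd, c), s2') \<in> trans T2)
      \<or> ((s1, (u, Snd, c), s1') \<in> trans T1 \<and> c \<notin> ls T2 s2 \<and> s2 = s2')
      \<or> (c \<notin> ls T1 s1 \<and> s1 = s1' \<and> (s2, (u, Snd, c), s2') \<in> trans T2)}
    \<union>
    {((s1, s2), (u, Rcv, c), (s1', s2')) | s1 s2 u c s1' s2'.
        ((s1, (u, Rcv, c), s1') \<in> trans T1 \<and> (s2, (u, Rcv, c), s2') \<in> trans T2)
      \<or> ((s1, (u, Rcv, c), s1') \<in> trans T1 \<and> c \<notin> ls T2 s2 \<and> s2 = s2')
      \<or> (c \<notin> ls T1 s1 \<and> s1 = s1' \<and> (s2, (u, Rcv, c), s2') \<in> trans T2)}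
    \<union>
    {((s1, s2), (u, g, star), (s1', s2')) | s1 s2 u g s1' s2'.
        ((s1, (u, g, star), s1') \<in> trans T1 \<and> s2 = s2'
           \<and> \<not> (\<exists>s2''. (s2, (u, Rcv, star), s2'') \<in> trans T2))
      \<or> (s1 = s1' \<and> \<not> (\<exists>s1''. (s1, (u, Rcv, star), s1'') \<in> trans T1)
           \<and> (s2, (u, g, star), s2') \<in> trans T2)}"

definition compose ::
  "'c \<Rightarrow> ('c, 'a1, 'u, 's1) cts \<Rightarrow> ('c, 'a2, 'u, 's2) cts
     \<Rightarrow> ('c, 'a1 \<times> 'a2, 'u, 's1 \<times> 's2) cts" where
  "compose star T1 T2 =
    \<lparr> chans = chans T1 \<union> chans T2,
      alph = alph T1 \<times> alph T2,
      labs = labs T1 \<union> labs T2,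
      states = states T1 \<times> states T2,
      inits = inits T1 \<times> inits T2,
      trans = compose_trans star T1 T2,
      lab = (\<lambda>(s1, s2). (lab T1 s1, lab T2 s2)),
      ls = (\<lambda>(s1, s2). ls T1 s1 \<union> ls T2 s2) \<rparr>"

definition cts_iso ::
  "('s \<Rightarrow> 't) \<Rightarrow> ('a \<Rightarrow> 'b) \<Rightarrow> ('c, 'a, 'u, 's) cts \<Rightarrow> ('c, 'b, 'u, 't) cts \<Rightarrow> bool" where
  "cts_iso f g T T' \<longleftrightarrow>
     chans T' = chans T \<and>
     alph T' = g ` alph T \<and>
     labs T' = labs T \<and>
     states T' = f ` states T \<and>
     inits T' = f ` inits T \<and>
     trans T' = (\<lambda>(s, l, s'). (f s, l, f s')) ` trans T \<and>
     (\<forall>s\<in>states T. lab T' (f s) = g (lab T s) \<and> ls T' (f s) = ls T s)"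

definition assoc_r :: "('x \<times> 'y) \<times> 'z \<Rightarrow> 'x \<times> ('y \<times> 'z)" where
  "assoc_r = (\<lambda>((a, b), c). (a, (b, c)))"

end

(*
  A message u on channel c that one component sends is answered by the other one in one
  of two ways: it takes a receive transition, or it ignores the message and stays put, where
  ignoring means not listening on c for a point-to-point channel and being unable to receive u
  for the broadcast channel.  Hence a send of T1 || T2 is a send of one component together with
  a response of the other, a receive is a response of both in which at least one really receives,
  and a response of T1 || T2 is a pair of responses.  These descriptions are symmetric, and the
  last one makes them independent of bracketing, so commutativity and associativity of the
  transition relation become propositional identities.
*)

theory Submission
  imports Defs
begin

definition ignores :: "'c \<Rightarrow> ('c, 'a, 'u, 's) cts \<Rightarrow> 's \<Rightarrow> 'u \<Rightarrow> 'c \<Rightarrow> bool" where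
  "ignores star T s u c \<longleftrightarrow>
     (if c = star then \<not> (\<exists>t. (s, (u, Rcv, star), t) \<in> trans T) else c \<notin> ls T s)"

definition responds :: "'c \<Rightarrow> ('c, 'a, 'u, 's) cts \<Rightarrow> 's \<Rightarrow> 'u \<Rightarrow> 'c \<Rightarrow> 's \<Rightarrow> bool" where
  "responds star T s u c t \<longleftrightarrow> (s, (u, Rcv, c), t) \<in> trans T \<or> (ignores star T s u c \<and> t = s)"

(*
  The point-to-point rules of the composition also fire on the broadcast channel when a
  component does not listen on it; this invariant makes them instances of the broadcast rules.
  Unlike is_cts, it is preserved by composition.
*)
definition broadcast_listening :: "'c \<Rightarrow> ('c, 'a, 'u, 's) cts \<Rightarrow> bool" where
  "broadcast_listening star T \<longleftrightarrow> (\<forall>s u t. (s, (u, Rcv, star), t) \<in> trans T \<longrightarrow> star \<in> ls T s)"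

lemma is_cts_broadcast_listening:
  assumes "is_cts star T"
  shows "broadcast_listening star T"
  using assms unfolding is_cts_def broadcast_listening_def by blast

lemma ignores_if_not_listening:
  assumes "broadcast_listening star T" and "c \<notin> ls T s"
  shows "ignores star T s u c"
  using assms unfolding broadcast_listening_def ignores_def by auto

lemma trans_compose_swap:
  "((s2, s1), l, (t2, t1)) \<in> trans (compose star T2 T1) \<longleftrightarrow>
   ((s1, s2), l, (t1, t2)) \<in> trans (compose star T1 T2)"
  unfolding compose_def compose_trans_def by auto

lemma ignores_compose:
  "ignores star (compose star T1 T2) (s1, s2) u c \<longleftrightarrow>
    ignores star T1 s1 u c \<and> ignores star T2 s2 u c"
  unfolding ignores_def compose_def compose_trans_def by auto

lemma trans_compose_Rcv_iff:
  assumes "broadcast_listening star T1" and "broadcast_listening star T2"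
  shows "((s1, s2), (u, Rcv, c), (t1, t2)) \<in> trans (compose star T1 T2) \<longleftrightarrow>
    responds star T1 s1 u c t1 \<and> responds star T2 s2 u c t2 \<and>
    ((s1, (u, Rcv, c), t1) \<in> trans T1 \<or> (s2, (u, Rcv, c), t2) \<in> trans T2)"
  using ignores_if_not_listening[OF assms(1), of c s1 u]
    ignores_if_not_listening[OF assms(2), of c s2 u]
  unfolding responds_def ignores_def compose_def compose_trans_def
  by auto

lemma trans_compose_Snd_iff:
  assumes "broadcast_listening star T1" and "broadcast_listening star T2"
  shows "((s1, s2), (u, Snd, c), (t1, t2)) \<in> trans (compose star T1 T2) \<longleftrightarrow>
    (s1, (u, Snd, c), t1) \<in> trans T1 \<and> responds star T2 s2 u c t2 \<or>
    responds star T1 s1 u c t1 \<and> (s2, (u, Snd, c), t2) \<in> trans T2"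
  using ignores_if_not_listening[OF assms(1), of c s1 u]
    ignores_if_not_listening[OF assms(2), of c s2 u]
  unfolding responds_def ignores_def compose_def compose_trans_def
  by auto

lemma responds_compose:
  assumes "broadcast_listening star T1" and "broadcast_listening star T2"
  shows "responds star (compose star T1 T2) (s1, s2) u c (t1, t2) \<longleftrightarrow>
    responds star T1 s1 u c t1 \<and> responds star T2 s2 u c t2"
  using trans_compose_Rcv_iff[OF assms] unfolding responds_def by (auto simp: ignores_compose)

lemma broadcast_listening_compose:
  assumes "broadcast_listening star T1" and "broadcast_listening star T2"
  shows "broadcast_listening star (compose star T1 T2)"
  unfolding broadcast_listening_def split_paired_All
proof (intro allI impI)
  fix s1 s2 u t1 t2
  assume "((s1, s2), (u, Rcv, star), (t1, t2)) \<in> trans (compose star T1 T2)"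
  then have "(s1, (u, Rcv, star), t1) \<in> trans T1 \<or> (s2, (u, Rcv, star), t2) \<in> trans T2"
    by (simp add: trans_compose_Rcv_iff[OF assms])
  then show "star \<in> ls (compose star T1 T2) (s1, s2)"
    using assms unfolding broadcast_listening_def by (force simp: compose_def)
qed

lemma trans_compose_assoc:
  assumes "broadcast_listening star T1" and "broadcast_listening star T2"
    and "broadcast_listening star T3"
  shows "(((s1, s2), s3), l, ((t1, t2), t3)) \<in> trans (compose star (compose star T1 T2) T3) \<longleftrightarrow>
    ((s1, (s2, s3)), l, (t1, (t2, t3))) \<in> trans (compose star T1 (compose star T2 T3))"
proof -
  obtain u d c where "l = (u, d, c)" by (cases l)
  then show ?thesis
    using assms
    by (cases d)
      (auto simp: trans_compose_Snd_iff trans_compose_Rcv_iff responds_compose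
        broadcast_listening_compose)
qed

lemma image_trans_eqI:
  assumes "surj f" and "\<And>s l t. (f s, l, f t) \<in> R' \<longleftrightarrow> (s, l, t) \<in> R"
  shows "R' = (\<lambda>(s, l, t). (f s, l, f t)) ` R"
proof (intro set_eqI iffI)
  fix x
  assume "x \<in> R'"
  obtain a l b where x: "x = (a, l, b)" by (cases x)
  obtain s t where "a = f s" and "b = f t" using assms(1) by (metis surjD)
  with \<open>x \<in> R'\<close> have "(s, l, t) \<in> R" using x assms(2) by simp
  then show "x \<in> (\<lambda>(s, l, t). (f s, l, f t)) ` R"
    using x \<open>a = f s\<close> \<open>b = f t\<close> by (auto intro: rev_image_eqI)
qed (auto simp: assms(2))

lemma cts_iso_compose_swap:
  "cts_iso prod.swap prod.swap (compose star T1 T2) (compose star T2 T1)"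
  unfolding cts_iso_def
proof (intro conjI ballI)
  show "trans (compose star T2 T1) =
    (\<lambda>(s, l, t). (prod.swap s, l, prod.swap t)) ` trans (compose star T1 T2)"
  proof (rule image_trans_eqI)
    fix s l t
    show "(prod.swap s, l, prod.swap t) \<in> trans (compose star T2 T1) \<longleftrightarrow>
      (s, l, t) \<in> trans (compose star T1 T2)"
      by (cases s; cases t) (simp only: swap_simp, rule trans_compose_swap)
  qed (rule surj_swap)
qed (auto simp: compose_def product_swap)

lemma assoc_r_Pair [simp]: "assoc_r ((a, b), c) = (a, (b, c))"
  by (simp add: assoc_r_def)

lemma assoc_r_image_Times: "assoc_r ` ((A \<times> B) \<times> C) = A \<times> (B \<times> C)"
  by (force simp: image_iff)

lemma cts_iso_compose_assoc:
  assumes "broadcast_listening star T1" and "broadcast_listening star T2"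
    and "broadcast_listening star T3"
  shows "cts_iso assoc_r assoc_r (compose star (compose star T1 T2) T3)
                                (compose star T1 (compose star T2 T3))"
  unfolding cts_iso_def
proof (intro conjI ballI)
  show "trans (compose star T1 (compose star T2 T3)) =
    (\<lambda>(s, l, t). (assoc_r s, l, assoc_r t)) ` trans (compose star (compose star T1 T2) T3)"
  proof (rule image_trans_eqI)
    show "surj assoc_r"
      by (rule surjI[where f = "\<lambda>(a, b, c). ((a, b), c)"]) auto
  qed (simp add: split_paired_all trans_compose_assoc[OF assms])
qed (auto simp: compose_def assoc_r_image_Times Un_assoc)

theorem mainTheorem1:
  fixes star :: 'c
    and T1 :: "('c, 'a1, 'u, 's1) cts"
    and T2 :: "('c, 'a2, 'u, 's2) cts"
    and T3 :: "('c, 'a3, 'u, 's3) cts"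
  assumes "is_cts star T1" and "is_cts star T2" and "is_cts star T3"
  shows "cts_iso prod.swap prod.swap (compose star T1 T2) (compose star T2 T1)
       \<and> cts_iso assoc_r assoc_r (compose star (compose star T1 T2) T3)
                                  (compose star T1 (compose star T2 T3))"
  by (simp add: cts_iso_compose_swap cts_iso_compose_assoc is_cts_broadcast_listening assms)

end
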